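(* Suppose Assumption 1 holds. Let $x\in\operatorname{dom}\psi$, let $H$ be a symmetric matrix such that $Q \coloneqq Q^x_H$ is $\sigma$-strongly convex for some $\sigma>0$, and let $d$ satisfy the $\eta$-inexactness condition for $Q$ for some $\eta\in[0,1)$. Then, with $\Delta \coloneqq \nabla f(x)^Td + \psi(x+d)-\psi(x)$, $$\Delta \le -\frac12\left(\frac{1-\sqrt\eta}{1+\sqrt\eta}\,\sigma\|d\|^2 + d^THd\right) \le -\frac12\left(\frac{1-\sqrt\eta}{1+\sqrt\eta}\,\sigma + \lambda_{\min}(H)\right)\|d\|^2.$$ Moreover, if $(1-\sqrt\eta)\sigma + (1+\sqrt\eta)\lambda_{\min}(H) >0$, then for any $\beta,\gamma\in(0,1)$ the backtracking procedure that returns $\alpha=\beta^i$ for the smallest nonnegative integer $i$ with $F(x+\alpha d)\le F(x)+\alpha\gamma\Delta$ terminates after finitely many steps, and the returned $\alpha$ satisfies $$\alpha \ge \min\left\{1,\ \beta(1-\gamma)\frac{(1-\sqrt\eta)\sigma + (1+\sqrt\eta)\lambda_{\min}(H)}{L(1+\sqrt\eta)}\right\}.$$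
   Context: Problem setting: $F(x)=f(x)+\psi(x)$ on $\mathbb{R}^n$. Assumption 1: $f:\mathbb{R}^n\to\mathbb{R}$ is differentiable with $L$-Lipschitz continuous gradient for some $L>0$; $\psi:\mathbb{R}^n\to\mathbb{R}\cup\{+\infty\}$ is convex, proper and closed; $F$ is bounded below; and the solution set $\Omega=\{x: F(x)=F^*\}$, $F^*=\inf F$, is nonempty. For $x\in\mathbb{R}^n$ and a symmetric matrix $H$, $Q^x_H(d) \coloneqq \nabla f(x)^T d + \frac12 d^T H d + \psi(x+d) - \psi(x)$ (so $Q^x_H(0)=0$) and $Q^*\coloneqq\inf_d Q^x_H(d)$. A vector $d$ satisfies the $\eta$-inexactness condition (for $Q=Q^x_H$) if $Q(d)-Q^*\le \eta(Q(0)-Q^* )$, equivalently $Q(d)\le(1-\eta)Q^*$. $\lambda_{\min}(H)$ denotes the smallest eigenvalue of $H$. *)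

theory Defs
  imports "HOL-Analysis.Analysis"
begin

definition epi :: "('a::real_vector \<Rightarrow> ereal) \<Rightarrow> ('a \<times> real) set" where
  "epi \<phi> = {(x, r). \<phi> x \<le> ereal r}"

definition ext_convex :: "('a::real_vector \<Rightarrow> ereal) \<Rightarrow> bool" where
  "ext_convex \<phi> \<longleftrightarrow> convex (epi \<phi>)"

definition ext_proper :: "('a::real_vector \<Rightarrow> ereal) \<Rightarrow> bool" where
  "ext_proper \<phi> \<longleftrightarrow> (\<forall>x. \<phi> x \<noteq> -\<infinity>) \<and> (\<exists>x. \<phi> x \<noteq> \<infinity>)"

definition ext_closed :: "('a::real_normed_vector \<Rightarrow> ereal) \<Rightarrow> bool" where
  "ext_closed \<phi> \<longleftrightarrow> closed (epi \<phi>)"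

definition strongly_convex :: "real \<Rightarrow> ('a::real_normed_vector \<Rightarrow> ereal) \<Rightarrow> bool" where
  "strongly_convex \<sigma> \<phi> \<longleftrightarrow> ext_convex (\<lambda>x. \<phi> x - ereal (\<sigma> / 2 * (norm x)\<^sup>2))"

definition lambda_min :: "real^'n^'n \<Rightarrow> real" where
  "lambda_min H = Min {c. \<exists>v. v \<noteq> 0 \<and> H *v v = c *\<^sub>R v}"

text \<open>The model \<open>Q^x_H(d)\<close>, with gradient \<open>g x = \<nabla>f(x)\<close>.\<close>
definition Qmodel :: "(real^'n \<Rightarrow> real^'n) \<Rightarrow> (real^'n \<Rightarrow> ereal) \<Rightarrow> real^'n^'n
    \<Rightarrow> real^'n \<Rightarrow> real^'n \<Rightarrow> ereal" where
  "Qmodel g \<psi> H x d = ereal (g x \<bullet> d + 1/2 * (d \<bullet> (H *v d))) + \<psi> (x + d) - \<psi> x"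

end

theory Submission
  imports Defs
begin

text \<open>Write \<open>Q\<^sup>*\<close> for the infimum of the model \<open>Q\<close>; it is finite because \<open>Q - (\<sigma>/2)\<parallel>\<cdot>\<parallel>\<^sup>2\<close> is
  closed, convex and proper, hence has an affine minorant. Inexactness gives \<open>Q(d) \<le> (1 - \<eta>) Q\<^sup>*\<close>,
  while strong convexity along the segment from \<open>0\<close> to \<open>d\<close> gives
  \<open>Q\<^sup>* \<le> Q(t d) \<le> t Q(d) - (\<sigma>/2) t (1 - t) \<parallel>d\<parallel>\<^sup>2\<close>; taking \<open>t = 1/(1 + \<surd>\<eta>)\<close> yields
  \<open>Q(d) \<le> -(\<sigma>/2) (1 - \<surd>\<eta>)/(1 + \<surd>\<eta>) \<parallel>d\<parallel>\<^sup>2\<close>, which is the bound on \<open>\<Delta> = Q(d) - d\<^sup>THd/2\<close>.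
  Rayleigh's bound \<open>d\<^sup>THd \<ge> \<lambda>\<^sub>m\<^sub>i\<^sub>n(H) \<parallel>d\<parallel>\<^sup>2\<close> turns it into \<open>\<Delta> \<le> -(K/2) \<parallel>d\<parallel>\<^sup>2\<close> with
  \<open>K = (1 - \<surd>\<eta>)/(1 + \<surd>\<eta>) \<sigma> + \<lambda>\<^sub>m\<^sub>i\<^sub>n(H)\<close>. With the descent
  lemma for \<open>f\<close> and convexity of \<open>\<psi>\<close> on the segment, the Armijo condition then holds for every step
  \<open>\<alpha> \<le> min 1 ((1 - \<gamma>) K / L)\<close>, so backtracking stops, at the latest one step below this threshold.\<close>

lemma inner_matrix_vector_symmetric:
  fixes H :: "real^'n^'n"
  assumes "transpose H = H"
  shows "v \<bullet> (H *v w) = (H *v v) \<bullet> w"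
  by (metis assms dot_lmul_matrix transpose_matrix_vector)

lemma finite_eigenvalues_symmetric:
  fixes H :: "real^'n^'n"
  assumes sym: "transpose H = H"
  shows "finite {c. \<exists>v. v \<noteq> 0 \<and> H *v v = c *\<^sub>R v}"
proof (rule ccontr)
  let ?S = "{c. \<exists>v. v \<noteq> 0 \<and> H *v v = c *\<^sub>R v}"
  assume "infinite ?S"
  then obtain B where "card B = Suc CARD('n)" and "B \<subseteq> ?S"
    using infinite_arbitrarily_large by blast
  then have "\<forall>c\<in>B. \<exists>v. v \<noteq> 0 \<and> H *v v = c *\<^sub>R v" by blast
  then obtain e where e: "\<And>c. c \<in> B \<Longrightarrow> e c \<noteq> 0" "\<And>c. c \<in> B \<Longrightarrow> H *v e c = c *\<^sub>R e c"
    by (auto dest!: bchoice)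
  have orth: "e c \<bullet> e c' = 0" if "c \<in> B" "c' \<in> B" "c \<noteq> c'" for c c'
  proof -
    have "c * (e c \<bullet> e c') = (H *v e c) \<bullet> e c'" using e(2)[OF that(1)] by simp
    also have "\<dots> = e c \<bullet> (H *v e c')" by (rule inner_matrix_vector_symmetric[OF sym, symmetric])
    also have "\<dots> = c' * (e c \<bullet> e c')" using e(2)[OF that(2)] by simp
    finally show ?thesis using that(3) by simp
  qed
  have "inj_on e B"
  proof (rule inj_onI)
    fix c c' assume "c \<in> B" "c' \<in> B" "e c = e c'"
    then have "c *\<^sub>R e c = c' *\<^sub>R e c" using e(2) by metis
    then show "c = c'" using e(1) \<open>c \<in> B\<close> by simp
  qed
  have "pairwise orthogonal (e ` B)"
    using orth by (auto simp: pairwise_def orthogonal_def)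
  moreover have "0 \<notin> e ` B" using e(1) by force
  ultimately have "independent (e ` B)" by (rule pairwise_orthogonal_independent)
  then have "card (e ` B) \<le> CARD('n)" using independent_bound by force
  then show False using card_image[OF \<open>inj_on e B\<close>] \<open>card B = _\<close> by simp
qed

lemma nonneg_quadratic_linear_coeff_zero:
  fixes a b :: real
  assumes "\<And>t. 0 \<le> t * a + t\<^sup>2 * b"
  shows "a = 0"
proof (rule ccontr)
  assume "a \<noteq> 0"
  define c where "c = \<bar>b\<bar> + 1"
  have "c > 0" by (simp add: c_def add_pos_nonneg)
  define t where "t = - a / c"
  have "a + t * \<bar>b\<bar> = a / c"
    using \<open>c > 0\<close> unfolding t_def c_def by (simp add: field_simps)
  have "t * a + t\<^sup>2 * b \<le> t * a + t\<^sup>2 * \<bar>b\<bar>" by (simp add: mult_left_mono)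
  also have "\<dots> = t * (a + t * \<bar>b\<bar>)" by (simp add: power2_eq_square algebra_simps)
  also have "\<dots> = - (a / c)\<^sup>2" unfolding \<open>a + t * \<bar>b\<bar> = a / c\<close> by (simp add: t_def power2_eq_square)
  also have "\<dots> < 0" using \<open>a \<noteq> 0\<close> \<open>c > 0\<close> by simp
  finally show False using assms[of t] by simp
qed

lemma quadratic_form_minimizer_eigenvector:
  fixes H :: "real^'n^'n"
  assumes sym: "transpose H = H"
    and ge: "\<And>w. \<mu> * (w \<bullet> w) \<le> w \<bullet> (H *v w)" and eq: "v \<bullet> (H *v v) = \<mu> * (v \<bullet> v)"
  shows "H *v v = \<mu> *\<^sub>R v"
proof -
  define r where "r = H *v v - \<mu> *\<^sub>R v"
  have expand: "(v + t *\<^sub>R r) \<bullet> (H *v (v + t *\<^sub>R r)) - \<mu> * ((v + t *\<^sub>R r) \<bullet> (v + t *\<^sub>R r))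
      = t * (2 * (r \<bullet> r)) + t\<^sup>2 * (r \<bullet> (H *v r) - \<mu> * (r \<bullet> r))" for t
  proof -
    have "v \<bullet> (H *v r) = r \<bullet> (H *v v)"
      using inner_matrix_vector_symmetric[OF sym, of v r] by (simp add: inner_commute[of "H *v v"])
    moreover have "r \<bullet> (H *v v) = r \<bullet> r + \<mu> * (v \<bullet> r)"
      using inner_diff_right[of r "H *v v" "\<mu> *\<^sub>R v"] by (simp add: r_def[symmetric] inner_commute)
    moreover have "(v + t *\<^sub>R r) \<bullet> (H *v (v + t *\<^sub>R r))
        = v \<bullet> (H *v v) + t * (v \<bullet> (H *v r)) + t * (r \<bullet> (H *v v)) + t\<^sup>2 * (r \<bullet> (H *v r))"
      by (simp add: power2_eq_square algebra_simps)
    moreover have "(v + t *\<^sub>R r) \<bullet> (v + t *\<^sub>R r) = v \<bullet> v + 2 * t * (v \<bullet> r) + t\<^sup>2 * (r \<bullet> r)"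
      by (simp add: inner_commute[of r v] power2_eq_square algebra_simps)
    ultimately show ?thesis using eq
      by (simp add: power2_eq_square inner_commute[of r v] algebra_simps)
  qed
  have "0 \<le> t * (2 * (r \<bullet> r)) + t\<^sup>2 * (r \<bullet> (H *v r) - \<mu> * (r \<bullet> r))" for t
    using ge[of "v + t *\<^sub>R r"] expand[of t] by linarith
  then have "2 * (r \<bullet> r) = 0" by (rule nonneg_quadratic_linear_coeff_zero)
  then have "r = 0" by simp
  then show ?thesis unfolding r_def by simp
qed

lemma quadratic_form_min_on_sphere:
  fixes H :: "real^'n^'n"
  obtains v where "norm v = 1" "\<And>w. (v \<bullet> (H *v v)) * (w \<bullet> w) \<le> w \<bullet> (H *v w)"
proof -
  have "continuous_on (sphere 0 1) (\<lambda>v. v \<bullet> (H *v v))"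
    by (intro continuous_on_inner continuous_on_id matrix_vector_mult_linear_continuous_on)
  moreover have "sphere (0::real^'n) 1 \<noteq> {}" by simp
  ultimately obtain v where v: "v \<in> sphere 0 1"
    and min: "\<And>u. u \<in> sphere 0 1 \<Longrightarrow> v \<bullet> (H *v v) \<le> u \<bullet> (H *v u)"
    using continuous_attains_inf[OF compact_sphere] by blast
  have "(v \<bullet> (H *v v)) * (w \<bullet> w) \<le> w \<bullet> (H *v w)" for w
  proof (cases "w = 0")
    case False
    have "v \<bullet> (H *v v) \<le> (w /\<^sub>R norm w) \<bullet> (H *v (w /\<^sub>R norm w))" using False by (intro min) simp
    then show ?thesis using False
      by (simp add: matrix_vector_mult_scaleR power2_norm_eq_inner[symmetric] field_simps power2_eq_square)
  qed simp
  then show thesis using v that by simp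
qed

text \<open>The minimum of the quadratic form on the unit sphere is attained at an eigenvector, so it is
  itself an eigenvalue.\<close>
lemma lambda_min_le_quadratic_form:
  fixes H :: "real^'n^'n"
  assumes sym: "transpose H = H"
  shows "lambda_min H * (norm d)\<^sup>2 \<le> d \<bullet> (H *v d)"
proof -
  obtain v where v: "norm v = 1" and ge: "\<And>w. (v \<bullet> (H *v v)) * (w \<bullet> w) \<le> w \<bullet> (H *v w)"
    using quadratic_form_min_on_sphere[of H] by blast
  have "H *v v = (v \<bullet> (H *v v)) *\<^sub>R v"
    using v by (intro quadratic_form_minimizer_eigenvector[OF sym ge]) (simp add: power2_norm_eq_inner[symmetric])
  moreover have "v \<noteq> 0" using v by auto
  ultimately have "lambda_min H \<le> v \<bullet> (H *v v)"
    unfolding lambda_min_def by (intro Min_le finite_eigenvalues_symmetric[OF sym]) blast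
  then have "lambda_min H * (norm d)\<^sup>2 \<le> (v \<bullet> (H *v v)) * (d \<bullet> d)"
    by (simp add: mult_right_mono power2_norm_eq_inner[symmetric])
  then show ?thesis using ge[of d] by linarith
qed

lemma descent_lemma:
  fixes f :: "'a::real_inner \<Rightarrow> real" and g :: "'a \<Rightarrow> 'a"
  assumes grad: "\<And>y. (f has_derivative (\<lambda>h. g y \<bullet> h)) (at y)"
    and Lip: "L-lipschitz_on UNIV g" and "0 \<le> \<alpha>"
  shows "f (x + \<alpha> *\<^sub>R d) \<le> f x + \<alpha> * (g x \<bullet> d) + L / 2 * \<alpha>\<^sup>2 * (norm d)\<^sup>2"
proof -
  define \<phi> where "\<phi> t = f (x + t *\<^sub>R d) - t * (g x \<bullet> d) - L / 2 * t\<^sup>2 * (norm d)\<^sup>2" for t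
  have "((\<lambda>t. x + t *\<^sub>R d) has_derivative (\<lambda>h. h *\<^sub>R d)) (at t)" for t
    by (auto intro!: derivative_eq_intros)
  then have "((\<lambda>t. f (x + t *\<^sub>R d)) has_derivative (\<lambda>h. g (x + t *\<^sub>R d) \<bullet> (h *\<^sub>R d))) (at t)" for t
    using has_derivative_compose[OF _ grad] by blast
  then have "((\<lambda>t. f (x + t *\<^sub>R d)) has_real_derivative (g (x + t *\<^sub>R d) \<bullet> d)) (at t)" for t
    by (simp add: has_field_derivative_def mult_commute_abs)
  then have deriv: "(\<phi> has_real_derivative (g (x + t *\<^sub>R d) \<bullet> d - g x \<bullet> d - L * t * (norm d)\<^sup>2)) (at t)" for t
    unfolding \<phi>_def by (auto intro!: derivative_eq_intros)
  have "g (x + t *\<^sub>R d) \<bullet> d - g x \<bullet> d \<le> L * t * (norm d)\<^sup>2" if "0 \<le> t" for t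
  proof -
    have "(g (x + t *\<^sub>R d) - g x) \<bullet> d \<le> norm (g (x + t *\<^sub>R d) - g x) * norm d"
      by (rule norm_cauchy_schwarz)
    also have "\<dots> \<le> L * (t * norm d) * norm d"
      using lipschitz_onD[OF Lip, of "x + t *\<^sub>R d" x] that by (simp add: dist_norm mult_right_mono)
    finally show ?thesis by (simp add: power2_eq_square algebra_simps)
  qed
  then have "\<phi> \<alpha> \<le> \<phi> 0"
    using DERIV_nonpos_imp_nonincreasing[OF \<open>0 \<le> \<alpha>\<close>, of \<phi>] deriv by fastforce
  then show ?thesis unfolding \<phi>_def by simp
qed

lemma ext_convexD:
  fixes \<phi> :: "'a::real_vector \<Rightarrow> ereal"
  assumes "ext_convex \<phi>" "\<phi> a \<le> ereal u" "\<phi> b \<le> ereal v" "0 \<le> t" "t \<le> 1"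
  shows "\<phi> (t *\<^sub>R a + (1 - t) *\<^sub>R b) \<le> ereal (t * u + (1 - t) * v)"
proof -
  have "(a, u) \<in> epi \<phi>" "(b, v) \<in> epi \<phi>" using assms(2,3) by (simp_all add: epi_def)
  then have "t *\<^sub>R (a, u) + (1 - t) *\<^sub>R (b, v) \<in> epi \<phi>"
    using assms(1,4,5) unfolding ext_convex_def by (intro convexD) auto
  then show ?thesis by (simp add: epi_def)
qed

lemma norm_convex_combination_sq:
  fixes a b :: "'a::real_inner"
  shows "t * (norm a)\<^sup>2 + (1 - t) * (norm b)\<^sup>2 - (norm (t *\<^sub>R a + (1 - t) *\<^sub>R b))\<^sup>2
    = t * (1 - t) * (norm (a - b))\<^sup>2"
  by (simp add: power2_norm_eq_inner inner_commute[of b a] algebra_simps)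

lemma strongly_convexD:
  fixes \<phi> :: "'a::real_inner \<Rightarrow> ereal"
  assumes "strongly_convex \<sigma> \<phi>" "\<phi> a = ereal u" "\<phi> b = ereal v" "0 \<le> t" "t \<le> 1"
  shows "\<phi> (t *\<^sub>R a + (1 - t) *\<^sub>R b)
    \<le> ereal (t * u + (1 - t) * v - \<sigma> / 2 * t * (1 - t) * (norm (a - b))\<^sup>2)"
proof -
  define s where "s y = \<sigma> / 2 * (norm y)\<^sup>2" for y :: 'a
  define z where "z = t *\<^sub>R a + (1 - t) *\<^sub>R b"
  have "\<phi> z - ereal (s z) \<le> ereal (t * (u - s a) + (1 - t) * (v - s b))"
    using assms unfolding strongly_convex_def s_def z_def by (intro ext_convexD) simp_all
  then have "\<phi> z \<le> ereal (t * (u - s a) + (1 - t) * (v - s b) + s z)"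
    by (cases "\<phi> z") simp_all
  also have "t * (u - s a) + (1 - t) * (v - s b) + s z
      = t * u + (1 - t) * v - \<sigma> / 2 * (t * (norm a)\<^sup>2 + (1 - t) * (norm b)\<^sup>2 - (norm z)\<^sup>2)"
    by (simp add: s_def field_simps)
  also have "\<dots> = t * u + (1 - t) * v - \<sigma> / 2 * t * (1 - t) * (norm (a - b))\<^sup>2"
    unfolding z_def norm_convex_combination_sq by (simp add: mult.assoc)
  finally show ?thesis unfolding z_def .
qed

lemma closed_epi_translate_add:
  fixes \<phi> :: "'a::real_normed_vector \<Rightarrow> ereal"
  assumes "closed (epi \<phi>)" "continuous_on UNIV c"
  shows "closed (epi (\<lambda>y. \<phi> (x + y) + ereal (c y)))"
proof -
  have le_iff: "e + ereal a \<le> ereal r \<longleftrightarrow> e \<le> ereal (r - a)" for e a r by (cases e) auto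
  have epi_eq: "epi (\<lambda>y. \<phi> (x + y) + ereal (c y)) = (\<lambda>q. (x + fst q, snd q - c (fst q))) -` epi \<phi>"
    unfolding epi_def by (auto simp: le_iff)
  have "isCont c y" for y
    using assms(2) by (metis UNIV_I continuous_on_eq_continuous_at open_UNIV)
  then have "isCont (\<lambda>q. c (fst q)) q" for q :: "'a \<times> real"
    using isCont_o2[OF isCont_fst[OF continuous_ident]] by blast
  then have "isCont (\<lambda>q. (x + fst q, snd q - c (fst q))) q" for q :: "'a \<times> real"
    by (intro continuous_intros) auto
  then show ?thesis unfolding epi_eq by (rule continuous_closed_vimage[OF assms(1)])
qed

lemma closed_convex_epi_affine_minorant:
  fixes h :: "'a::euclidean_space \<Rightarrow> ereal"
  assumes cv: "convex (epi h)" and cl: "closed (epi h)" and "h z = ereal r"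
  obtains a c where "\<And>y. ereal (a \<bullet> y + c) \<le> h y"
proof -
  have "(z, r - 1) \<notin> epi h" using \<open>h z = ereal r\<close> by (simp add: epi_def)
  then obtain p b where sep: "p \<bullet> (z, r - 1) < b" "\<And>q. q \<in> epi h \<Longrightarrow> b < p \<bullet> q"
    using separating_hyperplane_closed_point[OF cv cl] by blast
  obtain u w where p: "p = (u, w)" by (cases p)
  have "b < u \<bullet> z + w * r" using sep(2)[of "(z, r)"] \<open>h z = ereal r\<close> p by (simp add: epi_def)
  moreover have "u \<bullet> z + w * (r - 1) < b" using sep(1) p by simp
  ultimately have "w > 0" by (simp add: algebra_simps)
  have "ereal ((- u /\<^sub>R w) \<bullet> y + b / w) \<le> h y" for y
  proof (cases "h y")
    case (real t)
    have "b < u \<bullet> y + w * t" using sep(2)[of "(y, t)"] real p by (simp add: epi_def)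
    then show ?thesis using real \<open>w > 0\<close> by (simp add: field_simps)
  next
    case MInf
    have "b < u \<bullet> y + w * t" for t using sep(2)[of "(y, t)"] MInf p by (simp add: epi_def)
    from this[of "(b - u \<bullet> y - 1) / w"] show ?thesis using \<open>w > 0\<close> by (simp add: field_simps)
  qed simp
  then show thesis by (rule that)
qed

lemma affine_plus_quadratic_lower_bound:
  fixes a y :: "'a::real_inner"
  assumes "\<sigma> > 0"
  shows "c - (norm a)\<^sup>2 / (2 * \<sigma>) \<le> a \<bullet> y + c + \<sigma> / 2 * (norm y)\<^sup>2"
proof -
  have "- (norm a * norm y) \<le> a \<bullet> y"
    using norm_cauchy_schwarz[of "- a" y] by simp
  moreover have "0 \<le> (\<sigma> * norm y - norm a)\<^sup>2 / (2 * \<sigma>)" using assms by simp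
  moreover have "(\<sigma> * norm y - norm a)\<^sup>2 / (2 * \<sigma>)
      = \<sigma> / 2 * (norm y)\<^sup>2 - norm a * norm y + (norm a)\<^sup>2 / (2 * \<sigma>)"
    using assms by (simp add: power2_eq_square field_simps)
  ultimately show ?thesis by linarith
qed

lemma strongly_convex_bounded_below:
  fixes \<phi> :: "'a::euclidean_space \<Rightarrow> ereal"
  assumes "\<sigma> > 0" "strongly_convex \<sigma> \<phi>"
    and closed: "closed (epi (\<lambda>y. \<phi> y - ereal (\<sigma> / 2 * (norm y)\<^sup>2)))" and "\<phi> z = ereal r"
  obtains m where "\<And>y. ereal m \<le> \<phi> y"
proof -
  define h where "h y = \<phi> y - ereal (\<sigma> / 2 * (norm y)\<^sup>2)" for y
  have "convex (epi h)" using assms(2) unfolding strongly_convex_def ext_convex_def h_def .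
  moreover have "h z = ereal (r - \<sigma> / 2 * (norm z)\<^sup>2)" using assms(4) by (simp add: h_def)
  ultimately obtain a c where ac: "\<And>y. ereal (a \<bullet> y + c) \<le> h y"
    using closed_convex_epi_affine_minorant closed unfolding h_def by blast
  have "ereal (c - (norm a)\<^sup>2 / (2 * \<sigma>)) \<le> \<phi> y" for y
  proof -
    have "ereal (c - (norm a)\<^sup>2 / (2 * \<sigma>)) \<le> ereal (a \<bullet> y + c) + ereal (\<sigma> / 2 * (norm y)\<^sup>2)"
      using affine_plus_quadratic_lower_bound[OF \<open>\<sigma> > 0\<close>] by simp
    also have "\<dots> \<le> h y + ereal (\<sigma> / 2 * (norm y)\<^sup>2)" by (rule add_right_mono[OF ac])
    also have "\<dots> = \<phi> y" by (cases "\<phi> y") (simp_all add: h_def)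
    finally show ?thesis .
  qed
  then show thesis by (rule that)
qed

lemma inexact_minimizer_decrease:
  fixes m q n \<sigma> \<eta> :: real
  assumes "0 \<le> \<eta>" "\<eta> < 1" and q_le: "q \<le> (1 - \<eta>) * m"
    and seg: "\<And>t. 0 < t \<Longrightarrow> t < 1 \<Longrightarrow> m \<le> t * q - \<sigma> / 2 * t * (1 - t) * n"
  shows "q \<le> - ((1 - sqrt \<eta>) / (1 + sqrt \<eta>) * \<sigma> / 2 * n)"
proof (cases "\<eta> = 0")
  case True
  have "z * (\<sigma> / 2 * n) \<le> - q" if "0 < z" "z < 1" for z
  proof -
    have "(1 - z) * q \<le> (1 - z) * (- (z * (\<sigma> / 2 * n)))"
      using seg[OF that] q_le True by (simp add: algebra_simps)
    then have "q \<le> - (z * (\<sigma> / 2 * n))"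
      by (rule mult_left_le_imp_le) (use that in simp)
    then show ?thesis by linarith
  qed
  then have "\<sigma> / 2 * n \<le> - q" by (rule field_le_mult_one_interval)
  then show ?thesis using True by simp
next
  case False
  define r where "r = sqrt \<eta>"
  have "0 < r" "r < 1" "\<eta> = r\<^sup>2"
    using assms False unfolding r_def by auto
  define t where "t = 1 / (1 + r)"
  \<comment> \<open>this \<open>t\<close> maximises the bound on \<open>-q\<close> obtained below\<close>
  have "0 < t" "t < 1" using \<open>0 < r\<close> by (simp_all add: t_def)
  have "(1 - \<eta>) * m \<le> (1 - \<eta>) * (t * q - \<sigma> / 2 * t * (1 - t) * n)"
    by (rule mult_left_mono[OF seg[OF \<open>0 < t\<close> \<open>t < 1\<close>]]) (use \<open>\<eta> < 1\<close> in simp)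
  with q_le have "q \<le> (1 - \<eta>) * (t * q - \<sigma> / 2 * t * (1 - t) * n)" by linarith
  also have "\<dots> = ((1 - \<eta>) * t) * q - ((1 - \<eta>) * (t * (1 - t))) * (\<sigma> / 2 * n)"
    by (simp add: field_simps)
  also have \<eta>t: "(1 - \<eta>) * t = 1 - r"
    using \<open>0 < r\<close> unfolding \<open>\<eta> = r\<^sup>2\<close> t_def by (simp add: power2_eq_square field_simps)
  also have "(1 - \<eta>) * (t * (1 - t)) = r * ((1 - r) / (1 + r))"
  proof -
    have "1 - t = r * t" using \<open>0 < r\<close> unfolding t_def by (simp add: field_simps)
    then have "(1 - \<eta>) * (t * (1 - t)) = (1 - r) * (r * t)" using \<eta>t by (metis mult.assoc)
    then show ?thesis by (simp add: t_def mult.commute)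
  qed
  finally have "r * q \<le> r * (- ((1 - r) / (1 + r) * \<sigma> / 2 * n))" by (simp add: algebra_simps)
  then have "q \<le> - ((1 - r) / (1 + r) * \<sigma> / 2 * n)"
    by (rule mult_left_le_imp_le) (use \<open>0 < r\<close> in simp)
  then show ?thesis by (simp add: r_def)
qed

lemma Qmodel_inexact_decrease:
  fixes g :: "real^'n \<Rightarrow> real^'n" and \<psi> :: "real^'n \<Rightarrow> ereal" and H :: "real^'n^'n" and x d :: "real^'n"
  defines "Q \<equiv> Qmodel g \<psi> H x"
  assumes proper: "ext_proper \<psi>" and closed: "ext_closed \<psi>" and "\<psi> x \<noteq> \<infinity>"
    and "\<sigma> > 0" and sc: "strongly_convex \<sigma> Q" and "0 \<le> \<eta>" "\<eta> < 1"
    and inexact: "Q d - Inf (range Q) \<le> ereal \<eta> * (Q 0 - Inf (range Q))"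
  shows "Q d \<le> ereal (- ((1 - sqrt \<eta>) / (1 + sqrt \<eta>) * \<sigma> / 2 * (norm d)\<^sup>2))"
proof -
  obtain px where px: "\<psi> x = ereal px"
    using \<open>\<psi> x \<noteq> \<infinity>\<close> proper unfolding ext_proper_def by (cases "\<psi> x") auto
  have Q0: "Q 0 = ereal 0" by (simp add: Q_def Qmodel_def px)
  have shift: "Q y - ereal (\<sigma> / 2 * (norm y)\<^sup>2)
      = \<psi> (x + y) + ereal (g x \<bullet> y + 1/2 * (y \<bullet> (H *v y)) - px - \<sigma> / 2 * (norm y)\<^sup>2)" for y
    by (cases "\<psi> (x + y)") (simp_all add: Q_def Qmodel_def px)
  have "continuous_on UNIV (\<lambda>y. g x \<bullet> y + 1/2 * (y \<bullet> (H *v y)) - px - \<sigma> / 2 * (norm y)\<^sup>2)"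
    by (intro continuous_intros matrix_vector_mult_linear_continuous_on)
  with closed have "closed (epi (\<lambda>y. Q y - ereal (\<sigma> / 2 * (norm y)\<^sup>2)))"
    unfolding shift ext_closed_def by (rule closed_epi_translate_add)
  then obtain m0 where "\<And>y. ereal m0 \<le> Q y"
    using strongly_convex_bounded_below[OF \<open>\<sigma> > 0\<close> sc _ Q0] by blast
  then have "ereal m0 \<le> Inf (range Q)" by (rule INF_greatest)
  moreover have "Inf (range Q) \<le> ereal 0" using INF_lower[of 0 UNIV Q] Q0 by simp
  ultimately obtain m where m: "Inf (range Q) = ereal m" by (cases "Inf (range Q)") auto
  have "Q d - ereal m \<le> ereal (\<eta> * (0 - m))" using inexact by (simp add: m Q0)
  then have "Q d \<le> ereal ((1 - \<eta>) * m)" by (cases "Q d") (simp_all add: algebra_simps)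
  moreover have Q_ge: "ereal m \<le> Q y" for y using INF_lower[of y UNIV Q] m by simp
  ultimately obtain q where q: "Q d = ereal q" and "q \<le> (1 - \<eta>) * m"
    using Q_ge[of d] by (cases "Q d") auto
  have "m \<le> t * q - \<sigma> / 2 * t * (1 - t) * (norm d)\<^sup>2" if "0 < t" "t < 1" for t
  proof -
    have "ereal m \<le> Q (t *\<^sub>R d + (1 - t) *\<^sub>R 0)" by (rule Q_ge)
    also have "\<dots> \<le> ereal (t * q + (1 - t) * 0 - \<sigma> / 2 * t * (1 - t) * (norm (d - 0))\<^sup>2)"
      using that by (intro strongly_convexD[OF sc q Q0]) simp_all
    finally show ?thesis by simp
  qed
  then have "q \<le> - ((1 - sqrt \<eta>) / (1 + sqrt \<eta>) * \<sigma> / 2 * (norm d)\<^sup>2)"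
    using inexact_minimizer_decrease[OF \<open>0 \<le> \<eta>\<close> \<open>\<eta> < 1\<close> \<open>q \<le> (1 - \<eta>) * m\<close>] by blast
  then show ?thesis using q by simp
qed

lemma armijo_sufficient_decrease:
  fixes f :: "'a::real_inner \<Rightarrow> real" and g :: "'a \<Rightarrow> 'a" and \<psi> :: "'a \<Rightarrow> ereal"
  assumes grad: "\<And>y. (f has_derivative (\<lambda>h. g y \<bullet> h)) (at y)" and Lip: "L-lipschitz_on UNIV g"
    and cvx: "ext_convex \<psi>" and px: "\<psi> x = ereal px" and pd: "\<psi> (x + d) = ereal pd"
    and dec: "g x \<bullet> d + pd - px \<le> - K / 2 * (norm d)\<^sup>2"
    and "0 \<le> \<alpha>" "\<alpha> \<le> 1" "\<gamma> \<le> 1" and step: "L * \<alpha> \<le> (1 - \<gamma>) * K"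
  shows "ereal (f (x + \<alpha> *\<^sub>R d)) + \<psi> (x + \<alpha> *\<^sub>R d)
    \<le> ereal (f x) + \<psi> x + ereal (\<alpha> * \<gamma>) * (ereal (g x \<bullet> d) + \<psi> (x + d) - \<psi> x)"
proof -
  define \<delta> where "\<delta> = g x \<bullet> d + pd - px"
  have "x + \<alpha> *\<^sub>R d = \<alpha> *\<^sub>R (x + d) + (1 - \<alpha>) *\<^sub>R x" by (simp add: algebra_simps)
  then have \<psi>_le: "\<psi> (x + \<alpha> *\<^sub>R d) \<le> ereal (\<alpha> * pd + (1 - \<alpha>) * px)"
    using ext_convexD[OF cvx, of "x + d" pd x px \<alpha>] pd px \<open>0 \<le> \<alpha>\<close> \<open>\<alpha> \<le> 1\<close> by simp
  have "L * \<alpha> * (norm d)\<^sup>2 \<le> (1 - \<gamma>) * K * (norm d)\<^sup>2" using step by (simp add: mult_right_mono)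
  also have "\<dots> \<le> (1 - \<gamma>) * (- 2 * \<delta>)"
    using dec \<open>\<gamma> \<le> 1\<close> unfolding \<delta>_def by (simp add: mult_left_mono mult.assoc)
  finally have "\<alpha> / 2 * (L * \<alpha> * (norm d)\<^sup>2) \<le> \<alpha> / 2 * ((1 - \<gamma>) * (- 2 * \<delta>))"
    by (rule mult_left_mono) (use \<open>0 \<le> \<alpha>\<close> in simp)
  moreover have "f (x + \<alpha> *\<^sub>R d) \<le> f x + \<alpha> * (g x \<bullet> d) + L / 2 * \<alpha>\<^sup>2 * (norm d)\<^sup>2"
    by (rule descent_lemma[OF grad Lip \<open>0 \<le> \<alpha>\<close>])
  ultimately have real_le: "f (x + \<alpha> *\<^sub>R d) + (\<alpha> * pd + (1 - \<alpha>) * px) \<le> f x + px + \<alpha> * \<gamma> * \<delta>"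
    unfolding \<delta>_def by (simp add: power2_eq_square algebra_simps)
  have "ereal (f (x + \<alpha> *\<^sub>R d)) + \<psi> (x + \<alpha> *\<^sub>R d) \<le> ereal (f (x + \<alpha> *\<^sub>R d)) + ereal (\<alpha> * pd + (1 - \<alpha>) * px)"
    by (rule add_left_mono[OF \<psi>_le])
  also have "\<dots> \<le> ereal (f x + px + \<alpha> * \<gamma> * \<delta>)" using real_le by simp
  also have "\<dots> = ereal (f x) + \<psi> x + ereal (\<alpha> * \<gamma>) * (ereal (g x \<bullet> d) + \<psi> (x + d) - \<psi> x)"
    by (simp add: px pd \<delta>_def)
  finally show ?thesis .
qed

lemma backtracking_terminates:
  fixes \<beta> c :: real and P :: "real \<Rightarrow> bool"
  assumes "0 < \<beta>" "\<beta> < 1" "0 < c" and suff: "\<And>\<alpha>. 0 < \<alpha> \<Longrightarrow> \<alpha> \<le> 1 \<Longrightarrow> \<alpha> \<le> c \<Longrightarrow> P \<alpha>"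
  shows "(\<exists>i::nat. P (\<beta> ^ i)) \<and> min 1 (\<beta> * c) \<le> \<beta> ^ (LEAST i. P (\<beta> ^ i))"
proof
  have pow: "0 < \<beta> ^ i" "\<beta> ^ i \<le> 1" for i
    using assms by (simp_all add: power_le_one)
  have "(\<lambda>i. \<beta> ^ i) \<longlonglongrightarrow> 0" using assms by (simp add: LIMSEQ_power_zero)
  then obtain i where "\<beta> ^ i < c" using \<open>0 < c\<close> by (metis (full_types) eventually_sequentially order_refl order_tendstoD(2))
  then have "P (\<beta> ^ i)" using pow by (intro suff) auto
  then show "\<exists>i. P (\<beta> ^ i)" ..
  show "min 1 (\<beta> * c) \<le> \<beta> ^ (LEAST i. P (\<beta> ^ i))"
  proof (cases "LEAST i. P (\<beta> ^ i)")
    case (Suc j)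
    then have "\<not> P (\<beta> ^ j)" using not_less_Least[of j "\<lambda>i. P (\<beta> ^ i)"] by simp
    then have "c < \<beta> ^ j" using suff pow by force
    then have "\<beta> * c \<le> \<beta> ^ Suc j" using \<open>0 < \<beta>\<close> by simp
    then show ?thesis using Suc by simp
  qed simp
qed

lemma armijo_backtracking_step_size:
  fixes f :: "'a::real_inner \<Rightarrow> real" and g :: "'a \<Rightarrow> 'a" and \<psi> :: "'a \<Rightarrow> ereal"
  assumes grad: "\<And>y. (f has_derivative (\<lambda>h. g y \<bullet> h)) (at y)" and Lip: "L-lipschitz_on UNIV g"
    and "L > 0" and cvx: "ext_convex \<psi>" and px: "\<psi> x = ereal px" and pd: "\<psi> (x + d) = ereal pd"
    and "K > 0" and dec: "g x \<bullet> d + pd - px \<le> - K / 2 * (norm d)\<^sup>2"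
    and "0 < \<beta>" "\<beta> < 1" "0 < \<gamma>" "\<gamma> < 1"
  defines "P \<equiv> \<lambda>\<alpha>. ereal (f (x + \<alpha> *\<^sub>R d)) + \<psi> (x + \<alpha> *\<^sub>R d)
    \<le> ereal (f x) + \<psi> x + ereal (\<alpha> * \<gamma>) * (ereal (g x \<bullet> d) + \<psi> (x + d) - \<psi> x)"
  shows "(\<exists>i::nat. P (\<beta> ^ i)) \<and> min 1 (\<beta> * (1 - \<gamma>) * K / L) \<le> \<beta> ^ (LEAST i. P (\<beta> ^ i))"
proof -
  have "P \<alpha>" if "0 < \<alpha>" "\<alpha> \<le> 1" "\<alpha> \<le> (1 - \<gamma>) * K / L" for \<alpha>
    unfolding P_def using that \<open>L > 0\<close> \<open>\<gamma> < 1\<close>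
    by (intro armijo_sufficient_decrease[OF grad Lip cvx px pd dec]) (simp_all add: field_simps)
  then have "(\<exists>i::nat. P (\<beta> ^ i)) \<and> min 1 (\<beta> * ((1 - \<gamma>) * K / L)) \<le> \<beta> ^ (LEAST i. P (\<beta> ^ i))"
    using assms by (intro backtracking_terminates) simp_all
  then show ?thesis by (simp add: mult.assoc)
qed

theorem lemma3:
  fixes f :: "real^'n \<Rightarrow> real" and g :: "real^'n \<Rightarrow> real^'n"
    and \<psi> :: "real^'n \<Rightarrow> ereal" and L :: real
    and x d :: "real^'n" and H :: "real^'n^'n" and \<sigma> \<eta> :: real
  defines "F \<equiv> (\<lambda>y. ereal (f y) + \<psi> y)"
    and "Q \<equiv> Qmodel g \<psi> H x"
    and "\<Delta> \<equiv> ereal (g x \<bullet> d) + \<psi> (x + d) - \<psi> x"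
  assumes grad: "\<And>y. (f has_derivative (\<lambda>h. g y \<bullet> h)) (at y)"
    and Lpos: "L > 0" and Lip: "L-lipschitz_on UNIV g"
    and psi_convex: "ext_convex \<psi>" and psi_proper: "ext_proper \<psi>" and psi_closed: "ext_closed \<psi>"
    and F_bdd: "bdd_below (range F)"
    and Omega_ne: "\<exists>y. F y = Inf (range F)"
    and x_dom: "\<psi> x \<noteq> \<infinity>"
    and H_sym: "transpose H = H"
    and sigma_pos: "\<sigma> > 0" and Q_sc: "strongly_convex \<sigma> Q"
    and eta: "0 \<le> \<eta>" "\<eta> < 1"
    and inexact: "Q d - Inf (range Q) \<le> ereal \<eta> * (Q 0 - Inf (range Q))"
  shows "\<Delta> \<le> ereal (- 1/2 * ((1 - sqrt \<eta>) / (1 + sqrt \<eta>) * \<sigma> * (norm d)\<^sup>2 + d \<bullet> (H *v d)))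
    \<and> - 1/2 * ((1 - sqrt \<eta>) / (1 + sqrt \<eta>) * \<sigma> * (norm d)\<^sup>2 + d \<bullet> (H *v d))
        \<le> - 1/2 * ((1 - sqrt \<eta>) / (1 + sqrt \<eta>) * \<sigma> + lambda_min H) * (norm d)\<^sup>2
    \<and> ((1 - sqrt \<eta>) * \<sigma> + (1 + sqrt \<eta>) * lambda_min H > 0 \<longrightarrow>
        (\<forall>\<beta> \<gamma>. 0 < \<beta> \<and> \<beta> < 1 \<and> 0 < \<gamma> \<and> \<gamma> < 1 \<longrightarrow>
          (\<exists>i::nat. F (x + \<beta> ^ i *\<^sub>R d) \<le> F x + ereal (\<beta> ^ i * \<gamma>) * \<Delta>) \<and>
          \<beta> ^ (LEAST i::nat. F (x + \<beta> ^ i *\<^sub>R d) \<le> F x + ereal (\<beta> ^ i * \<gamma>) * \<Delta>)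
            \<ge> min 1 (\<beta> * (1 - \<gamma>) * ((1 - sqrt \<eta>) * \<sigma> + (1 + sqrt \<eta>) * lambda_min H)
                       / (L * (1 + sqrt \<eta>)))))"
proof -
  define k where "k = (1 - sqrt \<eta>) / (1 + sqrt \<eta>)"
  define K where "K = k * \<sigma> + lambda_min H"
  obtain px where px: "\<psi> x = ereal px"
    using x_dom psi_proper unfolding ext_proper_def by (cases "\<psi> x") auto
  have Qd: "Q d \<le> ereal (- (k * \<sigma> / 2 * (norm d)\<^sup>2))"
    using Qmodel_inexact_decrease[OF psi_proper psi_closed x_dom sigma_pos _ eta] Q_sc inexact
    unfolding Q_def k_def by blast
  then obtain pd where pd: "\<psi> (x + d) = ereal pd"
    using psi_proper unfolding ext_proper_def by (cases "\<psi> (x + d)") (auto simp: Q_def Qmodel_def px)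
  define \<delta> where "\<delta> = g x \<bullet> d + pd - px"
  have \<Delta>: "\<Delta> = ereal \<delta>" by (simp add: \<Delta>_def px pd \<delta>_def)
  have decrease: "\<delta> \<le> - 1/2 * (k * \<sigma> * (norm d)\<^sup>2 + d \<bullet> (H *v d))"
    using Qd unfolding Q_def Qmodel_def px pd by (simp add: \<delta>_def field_simps)
  have rayleigh: "- 1/2 * (k * \<sigma> * (norm d)\<^sup>2 + d \<bullet> (H *v d)) \<le> - 1/2 * K * (norm d)\<^sup>2"
    using lambda_min_le_quadratic_form[OF H_sym, of d] by (simp add: K_def algebra_simps)
  have "1 + sqrt \<eta> > 0" using real_sqrt_ge_zero[OF eta(1)] by linarith
  then have K_eq: "(1 - sqrt \<eta>) * \<sigma> + (1 + sqrt \<eta>) * lambda_min H = (1 + sqrt \<eta>) * K"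
    by (simp add: K_def k_def distrib_left)
  have dec: "g x \<bullet> d + pd - px \<le> - K / 2 * (norm d)\<^sup>2"
    using decrease rayleigh unfolding \<delta>_def by linarith
  show ?thesis
    using decrease rayleigh armijo_backtracking_step_size[OF grad Lip Lpos psi_convex px pd _ dec]
      \<open>1 + sqrt \<eta> > 0\<close>
    unfolding F_def \<Delta>_def[symmetric] K_eq
    by (simp add: \<Delta> k_def[symmetric] K_def[symmetric] zero_less_mult_iff mult.assoc)
qed

end
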